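(* Let $\mathsf P$ be a network coding problem. A rate-capacity tuple $(\lambda,\omega)$ is $0$-achievable subject to the generalised routing constraint if and only if \[(\lambda,\omega)\in\mathsf{CL}\big(\mathrm{proj}^*_{\mathsf P}[\Gamma_{AA}\cap\mathcal C_T(\mathsf P)\cap\mathcal C_I(\mathsf P)]\big),\] where for $h\in\mathcal H[\mathcal S\cup\mathcal E]$, $\mathrm{proj}^*_{\mathsf P}[h]$ is the tuple with $\mathrm{proj}^*_{\mathsf P}[h](s)=\min_{u\in D(s)}h(s\wedge\mathrm{in}(u))$ for $s\in\mathcal S$ and $\mathrm{proj}^*_{\mathsf P}[h](e)=h(e)$ for $e\in\mathcal E$.
   Context: A network is $\mathsf G=(\mathcal V,\mathcal E)$, $\mathcal V$ a finite set of nodes, $\mathcal E$ a finite set of hyperedges, each $e$ with tail $\mathrm{tail}(e)\in\mathcal V$ and head $\mathrm{head}(e)\subseteq\mathcal V$, without directed cycles. A connection constraint $\mathsf M=(\mathcal S,O,D)$: finite source index set $\mathcal S$, $O:\mathcal S\to2^{\mathcal V}$ (where source $s$ is available), $D:\mathcal S\to2^{\mathcal V}$ (sinks of $s$). $\mathsf P=(\mathsf G,\mathsf M)$. Sources are imaginary edges with $\mathrm{head}(s)=O(s)$; $\mathrm{in}(e)=\{f\in\mathcal S\cup\mathcal E:\mathrm{tail}(e)\in\mathrm{head}(f)\}$ for $e\in\mathcal E$, $\mathrm{in}(u)=\{f\in\mathcal S\cup\mathcal E:u\in\mathrm{head}(f)\}$ for $u\in\mathcal V$. A rate-capacity tuple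 is $(\lambda,\omega)$, $\lambda:\mathcal S\to\mathbb R_{\ge0}$, $\omega:\mathcal E\to\mathbb R_{\ge0}$. A routing subnetwork is a subset $\mathcal T\subseteq\mathcal S\cup\mathcal E$ with $|\mathcal T\cap\mathcal S|=1$ (the unique source is $\nu(\mathcal T)$) such that $\mathrm{in}(e)\cap\mathcal T\ne\emptyset$ for every $e\in\mathcal T\cap\mathcal E$. A tuple $(\lambda,\omega)$ is $0$-achievable subject to the generalised routing constraint if there is a (finite) collection of routing subnetworks $\mathcal T_i$ with capacities $c_i\ge0$ such that (R1) $\omega(e)\ge\sum_{i:e\in\mathcal T_i}c_i$ for all $e\in\mathcal E$, and (R2$'$) for every $s\in\mathcal S$ and $u\in D(s)$, $\lambda(s)\le\sum_{i:\ \mathrm{in}(u)\cap\mathcal T_i\ne\emptyset,\ \nu(\mathcal T_i)=s}c_i$. $\mathcal H[\mathcal S\cup\mathcal E]$ is the set of real functions on subsets of $\mathcal S\cup\mathcal E$; $g(\alpha\mid\beta)=g(\alpha\cup\beta)-g(\beta)$, $g(\alpha\wedge\beta)=g(\alpha)+g(\beta)-g(\alpha\cup\beta)$. A function $h$ is atomic if there is $\mathcal T\subseteq\mathcal S\cup\mathcal E$ with $h(\beta)=1$ when $\beta\cap\mathcal T\ne\emptyset$ and $0$ otherwise; almost atomic if it is a finite nonnegative combination of atomic functions; $\Gamma_{AA}$ is the set of almost atomic functions. $\mathcal C_I(\mathsf P)=\{h:h(\mathcal S)=\sum_sh(s)\}$, $\mathcal C_T(\mathsf P)=\{h:h(e\mid\mathrm{in}(e))=0\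 \forall e\in\mathcal E\}$. Operators are applied elementwise to sets. For a set $\mathcal R$ of tuples, $\mathsf{CL}(\mathcal R)$ is the set of $(\lambda,\omega)$ such that there exist $(\lambda^n,\omega^n)\in\mathcal R$ and $c_n>0$ with $\lim_nc_n\omega^n(e)\le\omega(e)$ and $\lim_nc_n\lambda^n(s)\ge\lambda(s)$ for all $e,s$. *)

theory Defs
  imports "HOL-Analysis.Analysis"
begin

text \<open>Elements of S \<union> E are represented as ('s + 'e): Inl s is a source, Inr e an edge.\<close>

definition universe :: "'s set \<Rightarrow> 'e set \<Rightarrow> ('s + 'e) set" where
  "universe S E = Inl ` S \<union> Inr ` E"

fun headf :: "('e \<Rightarrow> 'v set) \<Rightarrow> ('s \<Rightarrow> 'v set) \<Rightarrow> ('s + 'e) \<Rightarrow> 'v set" where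
  "headf hed Orig (Inl s) = Orig s"
| "headf hed Orig (Inr e) = hed e"

definition in_node :: "'s set \<Rightarrow> 'e set \<Rightarrow> ('e \<Rightarrow> 'v set) \<Rightarrow> ('s \<Rightarrow> 'v set) \<Rightarrow> 'v \<Rightarrow> ('s + 'e) set" where
  "in_node S E hed Orig u = {f \<in> universe S E. u \<in> headf hed Orig f}"

definition in_edge :: "'s set \<Rightarrow> 'e set \<Rightarrow> ('e \<Rightarrow> 'v) \<Rightarrow> ('e \<Rightarrow> 'v set) \<Rightarrow> ('s \<Rightarrow> 'v set) \<Rightarrow> 'e \<Rightarrow> ('s + 'e) set" where
  "in_edge S E tal hed Orig e = in_node S E hed Orig (tal e)"

definition network_problem ::
  "'v set \<Rightarrow> 'e set \<Rightarrow> ('e \<Rightarrow> 'v) \<Rightarrow> ('e \<Rightarrow> 'v set) \<Rightarrow> 's set \<Rightarrow> ('s \<Rightarrow> 'v set) \<Rightarrow> ('s \<Rightarrow> 'v set) \<Rightarrow> bool" where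
  "network_problem V E tal hed S Orig D \<longleftrightarrow>
     finite V \<and> finite E \<and> finite S \<and>
     (\<forall>e\<in>E. tal e \<in> V \<and> hed e \<subseteq> V) \<and>
     (\<forall>s\<in>S. Orig s \<subseteq> V \<and> D s \<subseteq> V) \<and>
     acyclic {(tal e, v) | e v. e \<in> E \<and> v \<in> hed e}"

definition nu :: "('s + 'e) set \<Rightarrow> 's" where
  "nu T = (THE s. Inl s \<in> T)"

definition routing_subnetwork ::
  "'s set \<Rightarrow> 'e set \<Rightarrow> ('e \<Rightarrow> 'v) \<Rightarrow> ('e \<Rightarrow> 'v set) \<Rightarrow> ('s \<Rightarrow> 'v set) \<Rightarrow> ('s + 'e) set \<Rightarrow> bool" where
  "routing_subnetwork S E tal hed Orig T \<longleftrightarrow>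
     T \<subseteq> universe S E \<and> card (T \<inter> Inl ` S) = 1 \<and>
     (\<forall>e\<in>E. Inr e \<in> T \<longrightarrow> in_edge S E tal hed Orig e \<inter> T \<noteq> {})"

definition zero_achievable_routing ::
  "'e set \<Rightarrow> ('e \<Rightarrow> 'v) \<Rightarrow> ('e \<Rightarrow> 'v set) \<Rightarrow> 's set \<Rightarrow> ('s \<Rightarrow> 'v set) \<Rightarrow> ('s \<Rightarrow> 'v set)
     \<Rightarrow> ('s \<Rightarrow> real) \<Rightarrow> ('e \<Rightarrow> real) \<Rightarrow> bool" where
  "zero_achievable_routing E tal hed S Orig D lam om \<longleftrightarrow>
     (\<exists>(n::nat) (T :: nat \<Rightarrow> ('s + 'e) set) (c :: nat \<Rightarrow> real).
        (\<forall>i<n. routing_subnetwork S E tal hed Orig (T i) \<and> c i \<ge> 0) \<and>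
        (\<forall>e\<in>E. om e \<ge> (\<Sum>i\<in>{i. i < n \<and> Inr e \<in> T i}. c i)) \<and>
        (\<forall>s\<in>S. \<forall>u\<in>D s. lam s \<le>
            (\<Sum>i\<in>{i. i < n \<and> in_node S E hed Orig u \<inter> T i \<noteq> {} \<and> nu (T i) = s}. c i)))"

text \<open>Set functions h on subsets of S \<union> E (values outside are irrelevant).\<close>
definition atomic :: "'s set \<Rightarrow> 'e set \<Rightarrow> (('s + 'e) set \<Rightarrow> real) \<Rightarrow> bool" where
  "atomic S E h \<longleftrightarrow> (\<exists>T \<subseteq> universe S E. \<forall>\<beta> \<subseteq> universe S E.
      h \<beta> = (if \<beta> \<inter> T \<noteq> {} then 1 else 0))"

definition almost_atomic :: "'s set \<Rightarrow> 'e set \<Rightarrow> (('s + 'e) set \<Rightarrow> real) \<Rightarrow> bool" where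
  "almost_atomic S E h \<longleftrightarrow> (\<exists>(n::nat) (a :: nat \<Rightarrow> ('s + 'e) set \<Rightarrow> real) (c :: nat \<Rightarrow> real).
      (\<forall>i<n. atomic S E (a i) \<and> c i \<ge> 0) \<and>
      (\<forall>\<beta> \<subseteq> universe S E. h \<beta> = (\<Sum>i<n. c i * a i \<beta>)))"

definition C_I :: "'s set \<Rightarrow> (('s + 'e) set \<Rightarrow> real) \<Rightarrow> bool" where
  "C_I S h \<longleftrightarrow> h (Inl ` S) = (\<Sum>s\<in>S. h {Inl s})"

definition C_T :: "'s set \<Rightarrow> 'e set \<Rightarrow> ('e \<Rightarrow> 'v) \<Rightarrow> ('e \<Rightarrow> 'v set) \<Rightarrow> ('s \<Rightarrow> 'v set)
    \<Rightarrow> (('s + 'e) set \<Rightarrow> real) \<Rightarrow> bool" where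
  "C_T S E tal hed Orig h \<longleftrightarrow> (\<forall>e\<in>E.
      h ({Inr e} \<union> in_edge S E tal hed Orig e) - h (in_edge S E tal hed Orig e) = 0)"

text \<open>g(a \<and> b) = g(a) + g(b) - g(a \<union> b)\<close>
definition mutual :: "('a set \<Rightarrow> real) \<Rightarrow> 'a set \<Rightarrow> 'a set \<Rightarrow> real" where
  "mutual g a b = g a + g b - g (a \<union> b)"

text \<open>proj*: the source component is a minimum over D(s), taken in ereal so that
  the minimum over an empty D(s) is +\<infinity>.\<close>
definition proj_star :: "'s set \<Rightarrow> 'e set \<Rightarrow> ('e \<Rightarrow> 'v set) \<Rightarrow> ('s \<Rightarrow> 'v set) \<Rightarrow> ('s \<Rightarrow> 'v set)
    \<Rightarrow> (('s + 'e) set \<Rightarrow> real) \<Rightarrow> ('s \<Rightarrow> ereal) \<times> ('e \<Rightarrow> real)" where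
  "proj_star S E hed Orig D h =
     ((\<lambda>s. INF u\<in>D s. ereal (mutual h {Inl s} (in_node S E hed Orig u))),
      (\<lambda>e. h {Inr e}))"

definition CL :: "'s set \<Rightarrow> 'e set \<Rightarrow> (('s \<Rightarrow> ereal) \<times> ('e \<Rightarrow> real)) set
    \<Rightarrow> (('s \<Rightarrow> real) \<times> ('e \<Rightarrow> real)) set" where
  "CL S E R = {(lam, om). \<exists>(seq :: nat \<Rightarrow> ('s \<Rightarrow> ereal) \<times> ('e \<Rightarrow> real)) (c :: nat \<Rightarrow> real).
      (\<forall>n. seq n \<in> R \<and> c n > 0) \<and>
      (\<forall>e\<in>E. \<exists>L. ((\<lambda>n. c n * snd (seq n) e) \<longlonglongrightarrow> L) \<and> L \<le> om e) \<and>
      (\<forall>s\<in>S. \<exists>L. ((\<lambda>n. ereal (c n) * fst (seq n) s) \<longlonglongrightarrow> L) \<and> L \<ge> ereal (lam s))}"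

end

theory Submission
  imports Defs
begin

text \<open>
  A routing with subnetworks \<open>T\<^sub>i\<close> and rates \<open>c\<^sub>i\<close> gives the almost atomic function
  \<open>h \<beta> = \<Sum>\<^sub>i c\<^sub>i [\<beta> \<inter> T\<^sub>i \<noteq> {}]\<close>; every edge of a \<open>T\<^sub>i\<close> has an input in \<open>T\<^sub>i\<close> and every \<open>T\<^sub>i\<close>
  has exactly one source, which makes \<open>h\<close> satisfy \<open>C_T\<close> and \<open>C_I\<close>, and \<open>proj*\<close> of \<open>h\<close>
  dominates the rate-capacity tuple.

  Conversely, for an almost atomic \<open>h\<close> both \<open>C_T\<close> and \<open>C_I\<close> are equalities between sums of
  atom-wise comparable nonnegative terms, so they hold for every atom of positive weight. Hence the
  positive atoms containing a source are routing subnetworks, and they form a routing whose edge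
  loads are at most the values \<open>h {e}\<close> and which delivers exactly \<open>h (s \<and> in(u))\<close> from \<open>s\<close> to \<open>u\<close>.
  Along the scaled sequence in the definition of \<open>CL\<close> the weights of subnetworks that contain an
  edge are bounded by the capacities, so a subsequence converges; the remaining subnetworks consist
  of a single source, use no capacity and simply receive the weight \<open>\<lambda>(s)\<close>.
\<close>

definition cover :: "('i \<Rightarrow> real) \<Rightarrow> ('i \<Rightarrow> 'a set) \<Rightarrow> 'i set \<Rightarrow> 'a set \<Rightarrow> real" where
  "cover c T I \<beta> = (\<Sum>i\<in>I. c i * of_bool (\<beta> \<inter> T i \<noteq> {}))"

lemma sum_of_bool_filter:
  assumes "finite I"
  shows "(\<Sum>i\<in>I. c i * of_bool (P i)) = (\<Sum>i\<in>{i\<in>I. P i}. c i :: real)"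
proof -
  have "(\<Sum>i\<in>I. c i * of_bool (P i)) = (\<Sum>i\<in>I. if P i then c i else 0)"
    by (intro sum.cong) auto
  also have "\<dots> = (\<Sum>i\<in>{i\<in>I. P i}. c i)"
    using assms by (rule sum.inter_filter[symmetric])
  finally show ?thesis .
qed

lemma weighted_sum_eq_iff:
  fixes a b c :: "'i \<Rightarrow> real"
  assumes "finite I" and "\<And>i. i \<in> I \<Longrightarrow> 0 \<le> c i \<and> b i \<le> a i"
  shows "(\<Sum>i\<in>I. c i * a i) = (\<Sum>i\<in>I. c i * b i) \<longleftrightarrow> (\<forall>i\<in>I. 0 < c i \<longrightarrow> a i = b i)"
proof -
  have "(\<Sum>i\<in>I. c i * a i) = (\<Sum>i\<in>I. c i * b i) \<longleftrightarrow> (\<Sum>i\<in>I. c i * (a i - b i)) = 0"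
    by (simp add: right_diff_distrib sum_subtractf)
  also have "\<dots> \<longleftrightarrow> (\<forall>i\<in>I. c i * (a i - b i) = 0)"
    using assms by (intro sum_nonneg_eq_0_iff) auto
  also have "\<dots> \<longleftrightarrow> (\<forall>i\<in>I. 0 < c i \<longrightarrow> a i = b i)"
    using assms(2) by (auto simp: less_le)
  finally show ?thesis .
qed

lemma cover_singleton: "finite I \<Longrightarrow> cover c T I {x} = (\<Sum>i\<in>{i\<in>I. x \<in> T i}. c i)"
  by (simp add: cover_def sum_of_bool_filter Int_def)

lemma mutual_cover:
  "mutual (cover c T I) A B = (\<Sum>i\<in>I. c i * of_bool (A \<inter> T i \<noteq> {} \<and> B \<inter> T i \<noteq> {}))"
proof -
  have "c i * of_bool (A \<inter> T i \<noteq> {}) + c i * of_bool (B \<inter> T i \<noteq> {})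
      - c i * of_bool ((A \<union> B) \<inter> T i \<noteq> {}) = c i * of_bool (A \<inter> T i \<noteq> {} \<and> B \<inter> T i \<noteq> {})" for i
    by (cases "A \<inter> T i = {}"; cases "B \<inter> T i = {}") (simp_all add: Int_Un_distrib2)
  then show ?thesis
    by (simp add: mutual_def cover_def sum.distrib[symmetric] sum_subtractf[symmetric])
qed

lemma mutual_cover_singleton:
  "finite I \<Longrightarrow> mutual (cover c T I) {x} B = (\<Sum>i\<in>{i\<in>I. x \<in> T i \<and> B \<inter> T i \<noteq> {}}. c i)"
  by (simp add: mutual_cover sum_of_bool_filter Int_def)

lemma cover_insert_eq_iff:
  assumes "finite I" and "\<And>i. i \<in> I \<Longrightarrow> 0 \<le> c i"
  shows "cover c T I (insert x A) = cover c T I A \<longleftrightarrow> (\<forall>i\<in>I. 0 < c i \<and> x \<in> T i \<longrightarrow> A \<inter> T i \<noteq> {})"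
proof -
  have "of_bool (A \<inter> T i \<noteq> {}) \<le> (of_bool (insert x A \<inter> T i \<noteq> {}) :: real)" for i
    by auto
  then show ?thesis
    unfolding cover_def using assms by (subst weighted_sum_eq_iff) auto
qed

lemma cover_additive_iff:
  assumes "finite I" and "finite X" and "\<And>i. i \<in> I \<Longrightarrow> 0 \<le> c i"
  shows "cover c T I X = (\<Sum>x\<in>X. cover c T I {x}) \<longleftrightarrow> (\<forall>i\<in>I. 0 < c i \<longrightarrow> card (X \<inter> T i) \<le> 1)"
proof -
  have "(\<Sum>x\<in>X. cover c T I {x}) = (\<Sum>i\<in>I. \<Sum>x\<in>X. c i * of_bool (x \<in> T i))"
    unfolding cover_def by (simp add: sum.swap[of _ I])
  also have "\<dots> = (\<Sum>i\<in>I. c i * real (card (X \<inter> T i)))"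
    using assms(2) by (simp add: sum_of_bool_filter sum_distrib_left[symmetric] Int_def)
  finally have sums: "(\<Sum>x\<in>X. cover c T I {x}) = (\<Sum>i\<in>I. c i * real (card (X \<inter> T i)))" .
  have "1 \<le> card (X \<inter> T i)" if "X \<inter> T i \<noteq> {}" for i
    using that assms(2) by (simp add: Suc_le_eq card_gt_0_iff)
  then have le: "of_bool (X \<inter> T i \<noteq> {}) \<le> real (card (X \<inter> T i))"
    and eq: "real (card (X \<inter> T i)) = of_bool (X \<inter> T i \<noteq> {}) \<longleftrightarrow> card (X \<inter> T i) \<le> 1" for i
    by (cases "X \<inter> T i = {}"; force)+
  have "cover c T I X = (\<Sum>x\<in>X. cover c T I {x}) \<longleftrightarrow>
      (\<Sum>i\<in>I. c i * real (card (X \<inter> T i))) = (\<Sum>i\<in>I. c i * of_bool (X \<inter> T i \<noteq> {}))"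
    unfolding sums by (auto simp: cover_def Int_commute)
  also have "\<dots> \<longleftrightarrow> (\<forall>i\<in>I. 0 < c i \<longrightarrow> real (card (X \<inter> T i)) = of_bool (X \<inter> T i \<noteq> {}))"
    using assms(1,3) le by (intro weighted_sum_eq_iff) auto
  finally show ?thesis
    by (simp only: eq)
qed

lemma sum_group_by:
  assumes "finite I" and "finite \<A>"
  shows "(\<Sum>A\<in>\<A>. \<Sum>i\<in>{i\<in>I. T i = A}. c i) = (\<Sum>i\<in>{i\<in>I. T i \<in> \<A>}. c i)"
  using assms by (subst sum.group[symmetric, of _ \<A> T]) (auto intro!: sum.cong)

lemma sum_bij_betw_filter:
  assumes "bij_betw f I B"
  shows "(\<Sum>i\<in>{i\<in>I. P (f i)}. g (f i)) = (\<Sum>y\<in>{y\<in>B. P y}. g y)"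
proof -
  have "bij_betw f {i\<in>I. P (f i)} {y\<in>B. P y}"
    using assms by (rule bij_betw_subset) (use assms in \<open>force simp: bij_betw_def\<close>)+
  then show ?thesis
    by (rule sum.reindex_bij_betw)
qed

lemma common_convergent_subseq:
  fixes f :: "nat \<Rightarrow> 'k \<Rightarrow> real"
  assumes "finite K" and "\<And>k. k \<in> K \<Longrightarrow> bounded (range (\<lambda>n. f n k))"
  shows "\<exists>r. strict_mono r \<and> (\<forall>k\<in>K. convergent (\<lambda>n. f (r n) k))"
  using assms
proof (induction K rule: finite_induct)
  case empty
  then show ?case by (auto intro: strict_mono_id)
next
  case (insert k K)
  then obtain r where r: "strict_mono r" "\<forall>k\<in>K. convergent (\<lambda>n. f (r n) k)" by auto
  have "bounded (range (\<lambda>n. f (r n) k))"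
    using insert.prems by (rule_tac bounded_subset[of "range (\<lambda>n. f n k)"]) auto
  then obtain l r' where r': "strict_mono r'" "((\<lambda>n. f (r n) k) \<circ> r') \<longlonglongrightarrow> l"
    using bounded_imp_convergent_subsequence by blast
  have "convergent (\<lambda>n. f (r (r' n)) k')" if "k' \<in> insert k K" for k'
    using that r'(2) convergent_subseq_convergent[OF r(2)[rule_format] r'(1)]
    by (auto simp: convergent_def o_def)
  moreover have "strict_mono (\<lambda>n. r (r' n))"
    using strict_mono_o[OF r(1) r'(1)] by (simp add: o_def)
  ultimately show ?case by blast
qed

lemma CL_memberI:
  assumes "p \<in> R" and "\<forall>e\<in>E. snd p e \<le> om e" and "\<forall>s\<in>S. ereal (lam s) \<le> fst p s"
  shows "(lam, om) \<in> CL S E R"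
  unfolding CL_def using assms by (auto intro!: exI[of _ "\<lambda>_. p"] exI[of _ "\<lambda>_. 1"])

lemma almost_atomicE:
  assumes "almost_atomic S E h"
  obtains n :: nat and T c where "\<forall>i<n. T i \<subseteq> universe S E \<and> 0 \<le> c i"
    and "\<forall>\<beta>\<subseteq>universe S E. h \<beta> = cover c T {..<n} \<beta>"
proof -
  obtain n :: nat and a c where ac: "\<forall>i<n. atomic S E (a i) \<and> 0 \<le> c i"
    and h: "\<forall>\<beta>\<subseteq>universe S E. h \<beta> = (\<Sum>i<n. c i * a i \<beta>)"
    using assms unfolding almost_atomic_def by blast
  have "\<forall>i\<in>{..<n}. \<exists>T \<subseteq> universe S E. \<forall>\<beta>\<subseteq>universe S E. a i \<beta> = (if \<beta> \<inter> T \<noteq> {} then 1 else 0)"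
    using ac by (simp add: atomic_def)
  then obtain T where T: "\<forall>i\<in>{..<n}. T i \<subseteq> universe S E \<and>
      (\<forall>\<beta>\<subseteq>universe S E. a i \<beta> = (if \<beta> \<inter> T i \<noteq> {} then 1 else 0))"
    by (metis bchoice)
  show thesis
  proof
    show "\<forall>i<n. T i \<subseteq> universe S E \<and> 0 \<le> c i" using T ac by simp
    show "\<forall>\<beta>\<subseteq>universe S E. h \<beta> = cover c T {..<n} \<beta>"
      using T h by (simp add: cover_def of_bool_def)
  qed
qed

locale network =
  fixes S :: "'s set" and E :: "'e set" and tal :: "'e \<Rightarrow> 'v" and hed :: "'e \<Rightarrow> 'v set"
    and Orig :: "'s \<Rightarrow> 'v set"
begin

abbreviation "routing \<equiv> routing_subnetwork S E tal hed Orig"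
abbreviation "inputs u \<equiv> in_node S E hed Orig u"

lemma routing_subset_universe: "routing T \<Longrightarrow> T \<subseteq> universe S E"
  by (simp add: routing_subnetwork_def)

lemma routing_source:
  assumes "routing T"
  shows "nu T \<in> S" and "T \<inter> Inl ` S = {Inl (nu T)}"
proof -
  obtain x where x: "T \<inter> Inl ` S = {x}"
    using assms by (auto simp: routing_subnetwork_def card_1_singleton_iff)
  then obtain s where s: "s \<in> S" "x = Inl s" by auto
  have "nu T = s"
    unfolding nu_def
  proof (rule the_equality)
    show "Inl s \<in> T" using x s by auto
    show "s' = s" if "Inl s' \<in> T" for s'
      using that x s routing_subset_universe[OF assms] by (auto simp: universe_def)
  qed
  then show "nu T \<in> S" and "T \<inter> Inl ` S = {Inl (nu T)}"
    using x s by auto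
qed

lemma routing_Inl_iff:
  assumes "routing T"
  shows "Inl s \<in> T \<longleftrightarrow> nu T = s"
proof
  assume "Inl s \<in> T"
  moreover from this have "s \<in> S"
    using routing_subset_universe[OF assms] by (auto simp: universe_def)
  ultimately have "Inl s \<in> T \<inter> Inl ` S" by blast
  then show "nu T = s"
    using routing_source(2)[OF assms] by simp
qed (use routing_source(2)[OF assms] in blast)

lemma routing_without_edges:
  assumes "routing T" and "\<forall>e\<in>E. Inr e \<notin> T"
  shows "T = {Inl (nu T)}"
proof -
  have "T \<subseteq> Inl ` S"
    using assms routing_subset_universe[of T] by (auto simp: universe_def)
  then show ?thesis
    using routing_source(2)[OF assms(1)] by blast
qed

lemma routing_singleton: "s \<in> S \<Longrightarrow> routing {Inl s}"
  by (simp add: routing_subnetwork_def universe_def)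

lemma nu_singleton: "nu {Inl s} = s"
  by (simp add: nu_def)

definition edge_load :: "(('s + 'e) set \<Rightarrow> real) \<Rightarrow> 'e \<Rightarrow> real" where
  "edge_load w e = (\<Sum>T\<in>{T. routing T \<and> Inr e \<in> T}. w T)"

definition delivered :: "(('s + 'e) set \<Rightarrow> real) \<Rightarrow> 's \<Rightarrow> 'v \<Rightarrow> real" where
  "delivered w s u = (\<Sum>T\<in>{T. routing T \<and> Inl s \<in> T \<and> inputs u \<inter> T \<noteq> {}}. w T)"

definition routing_solution ::
    "('s \<Rightarrow> 'v set) \<Rightarrow> ('s \<Rightarrow> real) \<Rightarrow> ('e \<Rightarrow> real) \<Rightarrow> (('s + 'e) set \<Rightarrow> real) \<Rightarrow> bool" where
  "routing_solution D lam om w \<longleftrightarrow>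
     (\<forall>T. routing T \<longrightarrow> 0 \<le> w T) \<and> (\<forall>e\<in>E. edge_load w e \<le> om e) \<and>
     (\<forall>s\<in>S. \<forall>u\<in>D s. lam s \<le> delivered w s u)"

text \<open>The source bounds are taken in \<open>ereal\<close>, as in \<open>proj_star\<close>, where the minimum over an
  empty \<open>D s\<close> is \<open>\<infinity>\<close>.\<close>

definition asymptotic_routing_solution ::
    "('s \<Rightarrow> 'v set) \<Rightarrow> ('s \<Rightarrow> real) \<Rightarrow> ('e \<Rightarrow> real) \<Rightarrow> (nat \<Rightarrow> ('s + 'e) set \<Rightarrow> real) \<Rightarrow> bool" where
  "asymptotic_routing_solution D lam om W \<longleftrightarrow>
     (\<forall>n T. 0 \<le> W n T) \<and>
     (\<forall>e\<in>E. \<exists>(a :: nat \<Rightarrow> real) L. a \<longlonglongrightarrow> L \<and> L \<le> om e \<and> (\<forall>n. edge_load (W n) e \<le> a n)) \<and>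
     (\<forall>s\<in>S. \<exists>(b :: nat \<Rightarrow> ereal) L. b \<longlonglongrightarrow> L \<and> ereal (lam s) \<le> L \<and>
        (\<forall>n. \<forall>u\<in>D s. b n \<le> ereal (delivered (W n) s u)))"

lemma asymptotic_routing_solution_subseq:
  assumes "strict_mono r" and "asymptotic_routing_solution D lam om W"
  shows "asymptotic_routing_solution D lam om (\<lambda>n. W (r n))"
  using assms LIMSEQ_subseq_LIMSEQ[OF _ assms(1)]
  unfolding asymptotic_routing_solution_def o_def by metis

end

locale finite_network = network +
  assumes finite_sources: "finite S" and finite_edges: "finite E"
begin

lemma finite_routing: "finite {T. routing T \<and> P T}"
proof (rule finite_subset)
  show "{T. routing T \<and> P T} \<subseteq> Pow (universe S E)"
    using routing_subset_universe by blast
  show "finite (Pow (universe S E))"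
    by (simp add: universe_def finite_sources finite_edges)
qed

lemma C_I_cover:
  fixes n :: nat
  assumes "\<forall>i<n. 0 \<le> c i"
  shows "C_I S (cover c T {..<n}) \<longleftrightarrow> (\<forall>i<n. 0 < c i \<longrightarrow> card (Inl ` S \<inter> T i) \<le> 1)"
proof -
  have "C_I S (cover c T {..<n}) \<longleftrightarrow>
      cover c T {..<n} (Inl ` S) = (\<Sum>x\<in>Inl ` S. cover c T {..<n} {x})"
    by (simp add: C_I_def sum.reindex)
  also have "\<dots> \<longleftrightarrow> (\<forall>i<n. 0 < c i \<longrightarrow> card (Inl ` S \<inter> T i) \<le> 1)"
    using assms finite_sources by (subst cover_additive_iff) auto
  finally show ?thesis .
qed

lemma zero_achievable_imp_CL:
  assumes "zero_achievable_routing E tal hed S Orig D lam om"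
  shows "(lam, om) \<in> CL S E (proj_star S E hed Orig D `
      {h. almost_atomic S E h \<and> C_T S E tal hed Orig h \<and> C_I S h})"
proof -
  obtain n :: nat and T c where routing: "\<forall>i<n. routing (T i) \<and> 0 \<le> c i"
    and R1: "\<forall>e\<in>E. (\<Sum>i\<in>{i. i < n \<and> Inr e \<in> T i}. c i) \<le> om e"
    and R2: "\<forall>s\<in>S. \<forall>u\<in>D s. lam s \<le> (\<Sum>i\<in>{i. i < n \<and> inputs u \<inter> T i \<noteq> {} \<and> nu (T i) = s}. c i)"
    using assms unfolding zero_achievable_routing_def by blast
  define h where "h = cover c T {..<n}"
  have "almost_atomic S E h"
    unfolding almost_atomic_def atomic_def
    using routing routing_subset_universe
    by (intro exI[of _ n] exI[of _ "\<lambda>i \<beta>. of_bool (\<beta> \<inter> T i \<noteq> {})"] exI[of _ c])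
      (auto simp: h_def cover_def)
  moreover have "C_T S E tal hed Orig h"
  proof -
    have "cover c T {..<n} (insert (Inr e) (in_edge S E tal hed Orig e)) =
        cover c T {..<n} (in_edge S E tal hed Orig e)" if "e \<in> E" for e
      using routing that by (subst cover_insert_eq_iff) (auto simp: routing_subnetwork_def)
    then show ?thesis by (simp add: C_T_def h_def)
  qed
  moreover have "C_I S h"
    unfolding h_def using routing by (auto simp: C_I_cover routing_subnetwork_def Int_commute)
  moreover have "h {Inr e} \<le> om e" if "e \<in> E" for e
    using R1 that by (simp add: h_def cover_singleton)
  moreover have "ereal (lam s) \<le> (INF u\<in>D s. ereal (mutual h {Inl s} (inputs u)))" if "s \<in> S" for s
  proof (rule INF_greatest)
    fix u assume "u \<in> D s"
    have "{i\<in>{..<n}. Inl s \<in> T i \<and> inputs u \<inter> T i \<noteq> {}} = {i. i < n \<and> inputs u \<inter> T i \<noteq> {} \<and> nu (T i) = s}"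
      using routing by (auto simp: routing_Inl_iff)
    then show "ereal (lam s) \<le> ereal (mutual h {Inl s} (inputs u))"
      using R2 \<open>s \<in> S\<close> \<open>u \<in> D s\<close> by (simp add: h_def mutual_cover_singleton)
  qed
  ultimately show ?thesis
    by (intro CL_memberI[of "proj_star S E hed Orig D h"]) (auto simp: proj_star_def)
qed

lemma routing_solution_imp_zero_achievable:
  assumes "routing_solution D lam om w"
  shows "zero_achievable_routing E tal hed S Orig D lam om"
proof -
  obtain f where f: "bij_betw f {0..<card {T. routing T}} {T. routing T}"
    using ex_bij_betw_nat_finite[OF finite_routing[of "\<lambda>_. True"]] by auto
  have routing_f: "routing (f i)" if "i < card {T. routing T}" for i
    using bij_betwE[OF f] that by simp
  have regroup: "(\<Sum>i\<in>{i. i < card {T. routing T} \<and> P (f i)}. w (f i)) = (\<Sum>T\<in>{T. routing T \<and> P T}. w T)"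
    for P
    using sum_bij_betw_filter[OF f, where P=P and g=w] by (simp add: atLeast0LessThan)
  have "(\<Sum>i\<in>{i. i < card {T. routing T} \<and> Inr e \<in> f i}. w (f i)) = edge_load w e" for e
    using regroup by (simp add: edge_load_def)
  moreover have "(\<Sum>i\<in>{i. i < card {T. routing T} \<and> inputs u \<inter> f i \<noteq> {} \<and> nu (f i) = s}. w (f i))
      = delivered w s u" for s u
  proof -
    have "{T. routing T \<and> inputs u \<inter> T \<noteq> {} \<and> nu T = s} = {T. routing T \<and> Inl s \<in> T \<and> inputs u \<inter> T \<noteq> {}}"
      by (auto simp: routing_Inl_iff)
    then show ?thesis
      using regroup[of "\<lambda>T. inputs u \<inter> T \<noteq> {} \<and> nu T = s"] by (simp add: delivered_def)
  qed
  ultimately show ?thesis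
    using assms routing_f unfolding zero_achievable_routing_def routing_solution_def
    by (intro exI[of _ "card {T. routing T}"] exI[of _ f] exI[of _ "w \<circ> f"]) auto
qed

lemma positive_atom_routing:
  fixes n :: nat
  assumes atoms: "\<forall>i<n. T i \<subseteq> universe S E \<and> 0 \<le> c i"
    and h: "\<forall>\<beta>\<subseteq>universe S E. h \<beta> = cover c T {..<n} \<beta>"
    and "C_T S E tal hed Orig h" and "C_I S h"
    and i: "i < n" "0 < c i" and s: "s \<in> S" "Inl s \<in> T i"
  shows "routing (T i)"
proof -
  have "C_I S (cover c T {..<n})"
    using \<open>C_I S h\<close> h by (auto simp: C_I_def universe_def)
  then have "card (Inl ` S \<inter> T i) \<le> 1"
    using atoms i by (simp add: C_I_cover)
  moreover have "0 < card (Inl ` S \<inter> T i)"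
    using finite_sources s by (auto simp: card_gt_0_iff)
  ultimately have "card (T i \<inter> Inl ` S) = 1"
    by (simp add: Int_commute)
  moreover have "in_edge S E tal hed Orig e \<inter> T i \<noteq> {}" if "e \<in> E" "Inr e \<in> T i" for e
  proof -
    have sub: "insert (Inr e) (in_edge S E tal hed Orig e) \<subseteq> universe S E"
      using that by (auto simp: universe_def in_edge_def in_node_def)
    then have "cover c T {..<n} (insert (Inr e) (in_edge S E tal hed Orig e)) =
        cover c T {..<n} (in_edge S E tal hed Orig e)"
      using \<open>C_T S E tal hed Orig h\<close> h that by (auto simp: C_T_def)
    then show ?thesis
      using atoms i that by (subst (asm) cover_insert_eq_iff) auto
  qed
  ultimately show ?thesis
    using atoms i by (simp add: routing_subnetwork_def)
qed

lemma routing_decomposition: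
  assumes "almost_atomic S E h" and "C_T S E tal hed Orig h" and "C_I S h"
  obtains w where "\<forall>T. 0 \<le> w T"
    and "\<forall>e\<in>E. edge_load w e \<le> h {Inr e}"
    and "\<forall>s\<in>S. \<forall>u. delivered w s u = mutual h {Inl s} (inputs u)"
proof -
  obtain n :: nat and T c where atoms: "\<forall>i<n. T i \<subseteq> universe S E \<and> 0 \<le> c i"
    and h: "\<forall>\<beta>\<subseteq>universe S E. h \<beta> = cover c T {..<n} \<beta>"
    using almost_atomicE[OF assms(1)] by blast
  define w where "w A = (\<Sum>i\<in>{i\<in>{..<n}. T i = A}. c i)" for A
  have load: "(\<Sum>A\<in>{A. routing A \<and> P A}. w A) = (\<Sum>i\<in>{i\<in>{..<n}. routing (T i) \<and> P (T i)}. c i)"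
    for P
    unfolding w_def using finite_routing by (subst sum_group_by) auto
  show thesis
  proof
    show "\<forall>A. 0 \<le> w A"
      using atoms by (auto simp: w_def intro: sum_nonneg)
    show "\<forall>e\<in>E. edge_load w e \<le> h {Inr e}"
    proof
      fix e assume "e \<in> E"
      have "edge_load w e \<le> (\<Sum>i\<in>{i\<in>{..<n}. Inr e \<in> T i}. c i)"
        unfolding edge_load_def load using atoms by (intro sum_mono2) auto
      also have "\<dots> = h {Inr e}"
        using h \<open>e \<in> E\<close> by (simp add: cover_singleton universe_def)
      finally show "edge_load w e \<le> h {Inr e}" .
    qed
    show "\<forall>s\<in>S. \<forall>u. delivered w s u = mutual h {Inl s} (inputs u)"
    proof (intro ballI allI)
      fix s u assume "s \<in> S"
      have "delivered w s u = (\<Sum>i\<in>{i\<in>{..<n}. Inl s \<in> T i \<and> inputs u \<inter> T i \<noteq> {}}. c i)"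
        unfolding delivered_def load
        using atoms positive_atom_routing[OF atoms h assms(2,3) _ _ \<open>s \<in> S\<close>]
        by (intro sum.mono_neutral_left) (auto simp: le_less)
      also have "\<dots> = mutual (cover c T {..<n}) {Inl s} (inputs u)"
        by (simp add: mutual_cover_singleton)
      also have "\<dots> = mutual h {Inl s} (inputs u)"
      proof -
        have "{Inl s} \<subseteq> universe S E" and "inputs u \<subseteq> universe S E"
          using \<open>s \<in> S\<close> by (auto simp: universe_def in_node_def)
        then show ?thesis
          using h by (simp add: mutual_def)
      qed
      finally show "delivered w s u = mutual h {Inl s} (inputs u)" .
    qed
  qed
qed

text \<open>Only the weights of subnetworks containing an edge need to converge: a subnetwork without
  edges is a single source, loads no edge, and is given the weight \<open>\<lambda>(s)\<close>.\<close>

lemma routing_solution_of_limit: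
  assumes lam0: "\<forall>s\<in>S. 0 \<le> lam s" and asym: "asymptotic_routing_solution D lam om W"
    and lim: "\<And>T. routing T \<Longrightarrow> \<exists>e\<in>E. Inr e \<in> T \<Longrightarrow> (\<lambda>n. W n T) \<longlonglongrightarrow> X T"
  shows "routing_solution D lam om (\<lambda>T. if \<exists>e\<in>E. Inr e \<in> T then X T else lam (nu T))"
    (is "routing_solution D lam om ?Y")
proof -
  have W0: "0 \<le> W n T" for n T
    using asym by (simp add: asymptotic_routing_solution_def)
  have lim_sum: "(\<lambda>n. \<Sum>T\<in>F. W n T) \<longlonglongrightarrow> (\<Sum>T\<in>F. ?Y T)"
    if "\<And>T. T \<in> F \<Longrightarrow> routing T \<and> (\<exists>e\<in>E. Inr e \<in> T)" for F
    using that lim by (auto intro!: tendsto_sum)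
  have Y0: "0 \<le> ?Y T" if "routing T" for T
  proof (cases "\<exists>e\<in>E. Inr e \<in> T")
    case True
    then show ?thesis
      using LIMSEQ_le_const[OF lim[OF that True]] W0 by simp
  qed (use lam0 routing_source(1)[OF that] in simp)
  have "edge_load ?Y e \<le> om e" if "e \<in> E" for e
  proof -
    obtain a L where a: "a \<longlonglongrightarrow> L" "L \<le> om e" "\<forall>n. edge_load (W n) e \<le> a n"
      using asym \<open>e \<in> E\<close> by (auto simp: asymptotic_routing_solution_def)
    have "(\<lambda>n. edge_load (W n) e) \<longlonglongrightarrow> edge_load ?Y e"
      unfolding edge_load_def using \<open>e \<in> E\<close> by (intro lim_sum) auto
    then have "edge_load ?Y e \<le> L"
      using LIMSEQ_le[OF _ a(1)] a(3) by blast
    with a(2) show ?thesis by simp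
  qed
  moreover have "lam s \<le> delivered ?Y s u" if s: "s \<in> S" and u: "u \<in> D s" for s u
  proof (cases "u \<in> Orig s")
    case True
    then have "{Inl s} \<in> {T. routing T \<and> Inl s \<in> T \<and> inputs u \<inter> T \<noteq> {}}"
      using s routing_singleton by (auto simp: in_node_def universe_def)
    then have "?Y {Inl s} \<le> delivered ?Y s u"
      unfolding delivered_def using Y0 finite_routing by (intro member_le_sum) auto
    then show ?thesis
      by (simp add: nu_singleton)
  next
    case False
    have carries_edge: "\<exists>e\<in>E. Inr e \<in> T" if "routing T" "Inl s \<in> T" "inputs u \<inter> T \<noteq> {}" for T
    proof (rule ccontr)
      assume "\<not> (\<exists>e\<in>E. Inr e \<in> T)"
      then have "T = {Inl s}"
        using routing_without_edges[OF that(1)] routing_Inl_iff[OF that(1)] that(2) by auto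
      then show False
        using that(3) False by (auto simp: in_node_def)
    qed
    obtain b L where b: "b \<longlonglongrightarrow> L" "ereal (lam s) \<le> L" "\<forall>n. b n \<le> ereal (delivered (W n) s u)"
      using asym s u by (auto simp: asymptotic_routing_solution_def)
    have "(\<lambda>n. ereal (delivered (W n) s u)) \<longlonglongrightarrow> ereal (delivered ?Y s u)"
      unfolding delivered_def using carries_edge by (intro tendsto_ereal lim_sum) auto
    then have "L \<le> ereal (delivered ?Y s u)"
      using LIMSEQ_le[OF b(1)] b(3) by blast
    with b(2) show ?thesis
      using order_trans ereal_less_eq(3) by blast
  qed
  ultimately show ?thesis
    using Y0 by (simp add: routing_solution_def)
qed

lemma asymptotic_routing_solution_imp_routing_solution:
  assumes lam0: "\<forall>s\<in>S. 0 \<le> lam s" and asym: "asymptotic_routing_solution D lam om W"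
  obtains w where "routing_solution D lam om w"
proof -
  define K where "K = {T. routing T \<and> (\<exists>e\<in>E. Inr e \<in> T)}"
  have "bounded (range (\<lambda>n. W n T))" if "T \<in> K" for T
  proof -
    obtain e where e: "e \<in> E" "Inr e \<in> T" and "routing T"
      using \<open>T \<in> K\<close> by (auto simp: K_def)
    obtain a L where "a \<longlonglongrightarrow> L" and a: "\<forall>n. edge_load (W n) e \<le> a n"
      using asym e by (auto simp: asymptotic_routing_solution_def)
    then obtain B where B: "\<forall>n. norm (a n) \<le> B"
      using convergent_imp_Bseq[of a] by (auto simp: convergent_def Bseq_def)
    have W0: "0 \<le> W n T" for n T
      using asym by (simp add: asymptotic_routing_solution_def)
    have W_le: "W n T \<le> edge_load (W n) e" for n
      unfolding edge_load_def using e \<open>routing T\<close> W0 finite_routing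
      by (intro member_le_sum) auto
    have "\<bar>W n T\<bar> \<le> B" for n
      using W0[of n T] W_le[of n] a B by (smt (verit) real_norm_def)
    then show ?thesis
      unfolding bounded_real by blast
  qed
  then obtain r where r: "strict_mono r" and conv: "\<forall>T\<in>K. convergent (\<lambda>n. W (r n) T)"
    using common_convergent_subseq[of K W] finite_routing K_def by auto
  show thesis
  proof (rule that, rule routing_solution_of_limit)
    show "\<forall>s\<in>S. 0 \<le> lam s" by (fact lam0)
    show "asymptotic_routing_solution D lam om (\<lambda>n. W (r n))"
      using r asym by (rule asymptotic_routing_solution_subseq)
    show "(\<lambda>n. W (r n) T) \<longlonglongrightarrow> lim (\<lambda>n. W (r n) T)" if "routing T" "\<exists>e\<in>E. Inr e \<in> T" for T
      using conv that by (simp add: K_def convergent_LIMSEQ_iff)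
  qed
qed

lemma CL_imp_asymptotic_routing_solution:
  assumes "(lam, om) \<in> CL S E (proj_star S E hed Orig D `
      {h. almost_atomic S E h \<and> C_T S E tal hed Orig h \<and> C_I S h})"
  obtains W where "asymptotic_routing_solution D lam om W"
proof -
  obtain h c where
    h: "\<forall>n. almost_atomic S E (h n) \<and> C_T S E tal hed Orig (h n) \<and> C_I S (h n)"
    and c: "\<forall>n. 0 < c n"
    and edge: "\<forall>e\<in>E. \<exists>L. ((\<lambda>n. c n * h n {Inr e}) \<longlonglongrightarrow> L) \<and> L \<le> om e"
    and src: "\<forall>s\<in>S. \<exists>L. ((\<lambda>n. ereal (c n) * (INF u\<in>D s. ereal (mutual (h n) {Inl s} (inputs u))))
        \<longlonglongrightarrow> L) \<and> ereal (lam s) \<le> L"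
  proof -
    obtain seq c where seq: "\<forall>n. seq n \<in> proj_star S E hed Orig D `
        {h. almost_atomic S E h \<and> C_T S E tal hed Orig h \<and> C_I S h} \<and> 0 < c n"
      and "\<forall>e\<in>E. \<exists>L. ((\<lambda>n. c n * snd (seq n) e) \<longlonglongrightarrow> L) \<and> L \<le> om e"
      and "\<forall>s\<in>S. \<exists>L. ((\<lambda>n. ereal (c n) * fst (seq n) s) \<longlonglongrightarrow> L) \<and> ereal (lam s) \<le> L"
      using assms unfolding CL_def by blast
    moreover obtain h where "\<forall>n. seq n = proj_star S E hed Orig D (h n) \<and>
        almost_atomic S E (h n) \<and> C_T S E tal hed Orig (h n) \<and> C_I S (h n)"
      using seq by (auto simp: image_iff) metis
    ultimately show thesis
      using that[of h c] by (simp add: proj_star_def)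
  qed
  have "\<forall>n. \<exists>w. (\<forall>T. 0 \<le> w T) \<and> (\<forall>e\<in>E. edge_load w e \<le> h n {Inr e}) \<and>
      (\<forall>s\<in>S. \<forall>u. delivered w s u = mutual (h n) {Inl s} (inputs u))"
    using routing_decomposition h by metis
  then obtain w where w0: "\<forall>n T. 0 \<le> w n T"
    and w_edge: "\<forall>n. \<forall>e\<in>E. edge_load (w n) e \<le> h n {Inr e}"
    and w_src: "\<forall>n. \<forall>s\<in>S. \<forall>u. delivered (w n) s u = mutual (h n) {Inl s} (inputs u)"
    by metis
  show thesis
  proof (rule that[of "\<lambda>n T. c n * w n T"], unfold asymptotic_routing_solution_def, intro conjI ballI allI)
    show "0 \<le> c n * w n T" for n T
      using c w0 by (simp add: less_imp_le)
  next
    fix e assume "e \<in> E"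
    have "edge_load (\<lambda>T. c n * w n T) e \<le> c n * h n {Inr e}" for n
      using w_edge \<open>e \<in> E\<close> c by (simp add: edge_load_def sum_distrib_left[symmetric])
    then show "\<exists>a L. a \<longlonglongrightarrow> L \<and> L \<le> om e \<and> (\<forall>n. edge_load (\<lambda>T. c n * w n T) e \<le> a n)"
      using edge \<open>e \<in> E\<close> by blast
  next
    fix s assume "s \<in> S"
    have "ereal (c n) * (INF u\<in>D s. ereal (mutual (h n) {Inl s} (inputs u)))
        \<le> ereal (delivered (\<lambda>T. c n * w n T) s u)" if "u \<in> D s" for n u
    proof -
      have "(INF u\<in>D s. ereal (mutual (h n) {Inl s} (inputs u))) \<le> ereal (delivered (w n) s u)"
        using w_src \<open>s \<in> S\<close> that by (auto intro: INF_lower2)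
      moreover have "0 \<le> ereal (c n)"
        using c by (simp add: less_imp_le)
      ultimately have "ereal (c n) * (INF u\<in>D s. ereal (mutual (h n) {Inl s} (inputs u)))
          \<le> ereal (c n * delivered (w n) s u)"
        using ereal_mult_left_mono by fastforce
      then show ?thesis
        by (simp add: delivered_def sum_distrib_left)
    qed
    then show "\<exists>b L. b \<longlonglongrightarrow> L \<and> ereal (lam s) \<le> L \<and>
        (\<forall>n. \<forall>u\<in>D s. b n \<le> ereal (delivered (\<lambda>T. c n * w n T) s u))"
      using src \<open>s \<in> S\<close> by blast
  qed
qed

end

theorem theorem6:
  fixes V :: "'v set" and E :: "'e set" and tal :: "'e \<Rightarrow> 'v" and hed :: "'e \<Rightarrow> 'v set"
    and S :: "'s set" and Orig :: "'s \<Rightarrow> 'v set" and D :: "'s \<Rightarrow> 'v set"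
    and lam :: "'s \<Rightarrow> real" and om :: "'e \<Rightarrow> real"
  assumes "network_problem V E tal hed S Orig D"
    and "\<forall>s\<in>S. lam s \<ge> 0"
    and "\<forall>e\<in>E. om e \<ge> 0"
  shows "zero_achievable_routing E tal hed S Orig D lam om \<longleftrightarrow>
    (lam, om) \<in> CL S E (proj_star S E hed Orig D `
        {h. almost_atomic S E h \<and> C_T S E tal hed Orig h \<and> C_I S h})"
proof -
  interpret finite_network S E tal hed Orig
    using assms(1) by unfold_locales (simp_all add: network_problem_def)
  show ?thesis
  proof
    assume "zero_achievable_routing E tal hed S Orig D lam om"
    then show "(lam, om) \<in> CL S E (proj_star S E hed Orig D `
        {h. almost_atomic S E h \<and> C_T S E tal hed Orig h \<and> C_I S h})"
      by (rule zero_achievable_imp_CL)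
  next
    assume "(lam, om) \<in> CL S E (proj_star S E hed Orig D `
        {h. almost_atomic S E h \<and> C_T S E tal hed Orig h \<and> C_I S h})"
    then obtain W where "asymptotic_routing_solution D lam om W"
      by (rule CL_imp_asymptotic_routing_solution)
    with assms(2) obtain w where "routing_solution D lam om w"
      by (rule asymptotic_routing_solution_imp_routing_solution)
    then show "zero_achievable_routing E tal hed S Orig D lam om"
      by (rule routing_solution_imp_zero_achievable)
  qed
qed

end
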